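(* Let $n\ge 2$, $\beta\in\partial\mathbb{D}$, $\{\alpha_j\}_{j=0}^{n-2}\in\mathbb{D}^{n-1}$. Write $P_n(z)=P_n(z;\{\alpha_j\}_{j=0}^{n-2},\beta)$, $Q_n(z)=Q_n(z;\{\alpha_j\}_{j=0}^{n-2},\beta)$, and $P_{n-1}(z)=P_{n-1}(z;\{\alpha_{j+1}\}_{j=0}^{n-3},\beta)$, $Q_{n-1}(z)=Q_{n-1}(z;\{\alpha_{j+1}\}_{j=0}^{n-3},\beta)$. Then \[ P_n=\tfrac12(z-\bar\alpha_0+1-\alpha_0z)P_{n-1}+\tfrac12(z-\bar\alpha_0-1+\alpha_0z)Q_{n-1}, \] \[ Q_n=\tfrac12(z+\bar\alpha_0+1+\alpha_0z)Q_{n-1}+\tfrac12(z+\bar\alpha_0-1-\alpha_0z)P_{n-1}. \]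
   Context: For Verblunsky coefficients $\alpha_0,\alpha_1,\dots\in\mathbb{D}$ the monic orthogonal polynomials on the unit circle satisfy $\Phi_0=1$, $\Phi_{k+1}(z)=z\Phi_k(z)-\bar\alpha_k\Phi_k^*(z)$ with $\Phi_k^*(z)=z^k\overline{\Phi_k(1/\bar z)}$; the second kind polynomials $\Psi_k$ satisfy the same recursion with each $\alpha_j$ replaced by $-\alpha_j$. For $m\ge1$ and $\beta\in\partial\mathbb{D}$, $P_m(z;\{\alpha_j\}_{j=0}^{m-2},\beta)=z\Phi_{m-1}(z)-\bar\beta\Phi_{m-1}^*(z)$ and $Q_m(z;\{\alpha_j\}_{j=0}^{m-2},\beta)=z\Psi_{m-1}(z)+\bar\beta\Psi_{m-1}^*(z)$, with $\Phi_{m-1},\Psi_{m-1}$ built from $\alpha_0,\dots,\alpha_{m-2}$. *)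

theory Defs
  imports "HOL-Complex_Analysis.Complex_Analysis" "HOL-Computational_Algebra.Polynomial"
begin

text \<open>Reversed polynomial of formal degree k: p^*(z) = z^k conj(p(1/conj z)).\<close>
definition opuc_star :: "nat \<Rightarrow> complex poly \<Rightarrow> complex poly" where
  "opuc_star k p = (\<Sum>i\<le>k. monom (cnj (coeff p (k - i))) i)"

fun Phi :: "(nat \<Rightarrow> complex) \<Rightarrow> nat \<Rightarrow> complex poly" where
  "Phi \<alpha> 0 = 1"
| "Phi \<alpha> (Suc k) = [:0, 1:] * Phi \<alpha> k - smult (cnj (\<alpha> k)) (opuc_star k (Phi \<alpha> k))"

definition Psi :: "(nat \<Rightarrow> complex) \<Rightarrow> nat \<Rightarrow> complex poly" where
  "Psi \<alpha> k = Phi (\<lambda>j. - \<alpha> j) k"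

text \<open>Paraorthogonal polynomials P_m, Q_m (only alpha_0..alpha_{m-2} are used).\<close>
definition P_para :: "nat \<Rightarrow> (nat \<Rightarrow> complex) \<Rightarrow> complex \<Rightarrow> complex poly" where
  "P_para m \<alpha> \<beta> = [:0, 1:] * Phi \<alpha> (m - 1) - smult (cnj \<beta>) (opuc_star (m - 1) (Phi \<alpha> (m - 1)))"

definition Q_para :: "nat \<Rightarrow> (nat \<Rightarrow> complex) \<Rightarrow> complex \<Rightarrow> complex poly" where
  "Q_para m \<alpha> \<beta> = [:0, 1:] * Psi \<alpha> (m - 1) + smult (cnj \<beta>) (opuc_star (m - 1) (Psi \<alpha> (m - 1)))"

end

theory Submission
  imports Defs
begin

text \<open>The Szego recursion acts linearly (over \<open>\<complex>[z]\<close>) on the pair \<open>(\<Phi>\<^sub>k, \<Phi>\<^sub>k\<^sup>*)\<close>, and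
  \<open>(\<Psi>\<^sub>k, -\<Psi>\<^sub>k\<^sup>*)\<close> obeys the very same recursion; \<open>P\<^sub>m\<close> and \<open>Q\<^sub>m\<close> are one further step with
  \<open>\<alpha> = \<beta>\<close>, read off in the first component, starting from \<open>(1, 1)\<close> and \<open>(1, -1)\<close> respectively.
  Performing the step with \<open>\<alpha>\<^sub>0\<close> first and expanding its result in the basis \<open>(1, 1)\<close>, \<open>(1, -1)\<close>
  gives, by linearity, \<open>P\<^sub>n\<close> and \<open>Q\<^sub>n\<close> as combinations of \<open>P\<^sub>n\<^sub>-\<^sub>1\<close> and \<open>Q\<^sub>n\<^sub>-\<^sub>1\<close> for the shifted
  coefficients.\<close>

lemma coeff_opuc_star:
  "coeff (opuc_star k p) i = (if i \<le> k then cnj (coeff p (k - i)) else 0)"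
  unfolding opuc_star_def by (simp add: coeff_sum coeff_monom)

lemma opuc_star_diff: "opuc_star k (p - q) = opuc_star k p - opuc_star k q"
  by (simp add: poly_eq_iff coeff_opuc_star)

lemma opuc_star_smult: "opuc_star k (smult c p) = smult (cnj c) (opuc_star k p)"
  by (simp add: poly_eq_iff coeff_opuc_star)

lemma opuc_star_pCons_0: "opuc_star (Suc k) (pCons 0 p) = opuc_star k p"
  by (auto simp add: poly_eq_iff coeff_opuc_star coeff_pCons Suc_diff_le split: nat.split)

lemma opuc_star_Suc:
  assumes "degree p \<le> k"
  shows "opuc_star (Suc k) p = pCons 0 (opuc_star k p)"
proof -
  have "coeff p (Suc k) = 0"
    using assms by (simp add: coeff_eq_0)
  then show ?thesis
    by (auto simp add: poly_eq_iff coeff_opuc_star coeff_pCons Suc_diff_le split: nat.split)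
qed

lemma opuc_star_opuc_star:
  assumes "degree p \<le> k"
  shows "opuc_star k (opuc_star k p) = p"
  using assms by (auto simp add: poly_eq_iff coeff_opuc_star coeff_eq_0)

lemma degree_opuc_star: "degree (opuc_star k p) \<le> k"
  by (rule degree_le) (simp add: coeff_opuc_star)

lemma degree_Phi: "degree (Phi a k) \<le> k"
proof (induction k)
  case 0
  then show ?case by simp
next
  case (Suc k)
  have "degree ([:0, 1:] * Phi a k) \<le> Suc k"
    using Suc degree_pCons_le[of 0 "Phi a k"] by simp
  moreover have "degree (smult (cnj (a k)) (opuc_star k (Phi a k))) \<le> Suc k"
    by (meson degree_smult_le degree_opuc_star le_Suc_eq order_trans)
  ultimately show ?case
    by (simp add: degree_diff_le)
qed

lemma opuc_star_Phi_Suc: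
  "opuc_star (Suc k) (Phi a (Suc k)) = opuc_star k (Phi a k) - smult (a k) ([:0, 1:] * Phi a k)"
  by (simp add: opuc_star_diff opuc_star_smult opuc_star_pCons_0 opuc_star_Suc degree_opuc_star
      opuc_star_opuc_star degree_Phi)

fun szego_step :: "complex \<Rightarrow> complex poly \<times> complex poly \<Rightarrow> complex poly \<times> complex poly" where
  "szego_step a (p, q) = ([:0, 1:] * p - smult (cnj a) q, q - smult a ([:0, 1:] * p))"

fun szego_iter :: "(nat \<Rightarrow> complex) \<Rightarrow> nat \<Rightarrow> complex poly \<times> complex poly \<Rightarrow> complex poly \<times> complex poly" where
  "szego_iter a 0 x = x"
| "szego_iter a (Suc k) x = szego_step (a k) (szego_iter a k x)"

lemma szego_iter_Phi: "szego_iter a k (1, 1) = (Phi a k, opuc_star k (Phi a k))"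
proof (induction k)
  case 0
  then show ?case by (simp add: poly_eq_iff coeff_opuc_star)
next
  case (Suc k)
  then show ?case using opuc_star_Phi_Suc[of k a] by simp
qed

lemma szego_iter_Psi: "szego_iter a k (1, -1) = (Psi a k, - opuc_star k (Psi a k))"
proof (induction k)
  case 0
  then show ?case by (simp add: Psi_def poly_eq_iff coeff_opuc_star)
next
  case (Suc k)
  then show ?case using opuc_star_Phi_Suc[of k "\<lambda>j. - a j"] by (simp add: Psi_def)
qed

lemma P_para_szego: "P_para (Suc k) a \<beta> = fst (szego_step \<beta> (szego_iter a k (1, 1)))"
  by (simp add: P_para_def szego_iter_Phi)

lemma Q_para_szego: "Q_para (Suc k) a \<beta> = fst (szego_step \<beta> (szego_iter a k (1, -1)))"
  by (simp add: Q_para_def szego_iter_Psi)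

lemma szego_iter_Suc_shift:
  "szego_iter a (Suc k) x = szego_iter (\<lambda>j. a (Suc j)) k (szego_step (a 0) x)"
  by (induction k) simp_all

lemma szego_step_add: "szego_step a (x + y) = szego_step a x + szego_step a y"
  by (cases x; cases y) (simp add: algebra_simps smult_add_right)

lemma szego_step_mult:
  "szego_step a (map_prod ((*) c) ((*) c) x) = map_prod ((*) c) ((*) c) (szego_step a x)"
  by (cases x) (simp add: algebra_simps)

lemma szego_iter_add: "szego_iter a k (x + y) = szego_iter a k x + szego_iter a k y"
  by (induction k) (simp_all add: szego_step_add)

lemma szego_iter_mult:
  "szego_iter a k (map_prod ((*) c) ((*) c) x) = map_prod ((*) c) ((*) c) (szego_iter a k x)"
  by (induction k) (simp_all add: szego_step_mult)

lemma szego_iter_Suc_para_expansion: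
  assumes "szego_step (a 0) x = (A + B, A - B)"
  shows "fst (szego_step b (szego_iter a (Suc k) x)) =
    A * P_para (Suc k) (\<lambda>j. a (Suc j)) b + B * Q_para (Suc k) (\<lambda>j. a (Suc j)) b"
proof -
  have "szego_step (a 0) x = map_prod ((*) A) ((*) A) (1, 1) + map_prod ((*) B) ((*) B) (1, -1)"
    using assms by simp
  then show ?thesis
    by (simp only: P_para_szego Q_para_szego szego_iter_Suc_shift szego_iter_add szego_iter_mult
        szego_step_add szego_step_mult) simp
qed

theorem theorem4p3:
  fixes n :: nat and \<alpha> :: "nat \<Rightarrow> complex" and \<beta> :: complex
  assumes "n \<ge> 2" and "norm \<beta> = 1" and "\<And>j. j \<le> n - 2 \<Longrightarrow> norm (\<alpha> j) < 1"
  shows "\<forall>z. poly (P_para n \<alpha> \<beta>) z =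
           (z - cnj (\<alpha> 0) + 1 - \<alpha> 0 * z) / 2 * poly (P_para (n - 1) (\<lambda>j. \<alpha> (Suc j)) \<beta>) z
         + (z - cnj (\<alpha> 0) - 1 + \<alpha> 0 * z) / 2 * poly (Q_para (n - 1) (\<lambda>j. \<alpha> (Suc j)) \<beta>) z
       \<and> poly (Q_para n \<alpha> \<beta>) z =
           (z + cnj (\<alpha> 0) + 1 + \<alpha> 0 * z) / 2 * poly (Q_para (n - 1) (\<lambda>j. \<alpha> (Suc j)) \<beta>) z
         + (z + cnj (\<alpha> 0) - 1 - \<alpha> 0 * z) / 2 * poly (P_para (n - 1) (\<lambda>j. \<alpha> (Suc j)) \<beta>) z"
proof -
  obtain k where n: "n = Suc (Suc k)"
    using assms(1) by (metis add_2_eq_Suc le_Suc_ex)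
  define A where "A = [:(1 - cnj (\<alpha> 0)) / 2, (1 - \<alpha> 0) / 2:]"
  define B where "B = [:(- 1 - cnj (\<alpha> 0)) / 2, (1 + \<alpha> 0) / 2:]"
  define C where "C = [:(cnj (\<alpha> 0) - 1) / 2, (1 - \<alpha> 0) / 2:]"
  define D where "D = [:(1 + cnj (\<alpha> 0)) / 2, (1 + \<alpha> 0) / 2:]"
  have step_P: "szego_step (\<alpha> 0) (1, 1) = (A + B, A - B)"
    by (simp add: A_def B_def) (simp add: field_simps)
  have P: "P_para n \<alpha> \<beta> = A * P_para (n - 1) (\<lambda>j. \<alpha> (Suc j)) \<beta> + B * Q_para (n - 1) (\<lambda>j. \<alpha> (Suc j)) \<beta>"
    using szego_iter_Suc_para_expansion[of \<alpha>, OF step_P, of \<beta> k]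
    by (simp only: n P_para_szego[of "Suc k" \<alpha>] diff_Suc_1)
  have step_Q: "szego_step (\<alpha> 0) (1, -1) = (C + D, C - D)"
    by (simp add: C_def D_def poly_eq_iff coeff_pCons split: nat.split) (simp add: field_simps)
  have Q: "Q_para n \<alpha> \<beta> = C * P_para (n - 1) (\<lambda>j. \<alpha> (Suc j)) \<beta> + D * Q_para (n - 1) (\<lambda>j. \<alpha> (Suc j)) \<beta>"
    using szego_iter_Suc_para_expansion[of \<alpha>, OF step_Q, of \<beta> k]
    by (simp only: n Q_para_szego[of "Suc k" \<alpha>] diff_Suc_1)
  show ?thesis
    by (simp add: P Q A_def B_def C_def D_def field_simps)
qed

end
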